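(* Let $X=GL_n/B$ be the complete flag variety over a field $k$ of characteristic $0$, $d=n(n-1)/2=\dim X$, and identify $\Omega^*(X)\cong\mathbb{L}[x_1,\ldots,x_n]/S$. Let $c\in\Omega^*(X)$ be a homogeneous element of degree $l$ such that the product of $c$ with any non-constant monomial in $x_1,\ldots,x_n$ is zero. Then $c\in\mathbb{L}^{l-d}[pt]$, i.e. $c=a[pt]$ for some $a\in\mathbb{L}$ of degree $l-d$, where $[pt]$ is the class of a point.
   Context: $\mathbb{L}\cong\mathbb{Z}[a_1,a_2,\ldots]$ is the Lazard ring, graded with $\deg a_i=-i$; $x_i=c_1(L_i)$ where $L_i$ is the line bundle on $X$ with fiber $F^i/F^{i-1}$ at a flag $F$, $\deg x_i=1$; $S$ is the ideal generated by the symmetric polynomials of strictly positive polynomial degree, and the isomorphism sends $x_i$ to $c_1(L_i)$. *)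

theory Defs
  imports "HOL-Library.Poly_Mapping" "HOL-Combinatorics.Permutations"
begin

text \<open>Variables of the polynomial ring L[x_1,...,x_n] = Z[a_1,a_2,...][x_1,...,x_n]:
  A i stands for the Lazard generator a_i (i >= 1), X j for x_j = c_1(L_j) (1 <= j <= n).\<close>
datatype lvar = A nat | X nat

type_synonym mon = "lvar \<Rightarrow>\<^sub>0 nat"
type_synonym lpoly = "mon \<Rightarrow>\<^sub>0 int"

definition var_ok :: "nat \<Rightarrow> lvar \<Rightarrow> bool" where
  "var_ok n v = (case v of A i \<Rightarrow> 1 \<le> i | X j \<Rightarrow> 1 \<le> j \<and> j \<le> n)"

definition in_ring :: "nat \<Rightarrow> lpoly \<Rightarrow> bool" where
  "in_ring n p = (\<forall>m\<in>Poly_Mapping.keys p. \<forall>v\<in>Poly_Mapping.keys (m::mon). var_ok n v)"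

definition in_Laz :: "lpoly \<Rightarrow> bool" where
  "in_Laz p = (\<forall>m\<in>Poly_Mapping.keys p. \<forall>v\<in>Poly_Mapping.keys (m::mon). \<exists>i\<ge>1. v = A i)"

definition var_wt :: "lvar \<Rightarrow> int" where
  "var_wt v = (case v of A i \<Rightarrow> - int i | X j \<Rightarrow> 1)"

definition wdeg :: "mon \<Rightarrow> int" where
  "wdeg m = (\<Sum>v\<in>Poly_Mapping.keys m. int (Poly_Mapping.lookup m v) * var_wt v)"

definition homog :: "int \<Rightarrow> lpoly \<Rightarrow> bool" where
  "homog l p = (\<forall>m\<in>Poly_Mapping.keys p. wdeg m = l)"

definition xdeg :: "mon \<Rightarrow> nat" where
  "xdeg m = (\<Sum>v\<in>Poly_Mapping.keys m. (case v of X j \<Rightarrow> Poly_Mapping.lookup m v | A i \<Rightarrow> 0))"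

definition rv :: "(nat \<Rightarrow> nat) \<Rightarrow> lvar \<Rightarrow> lvar" where
  "rv \<sigma> v = (case v of A i \<Rightarrow> A i | X j \<Rightarrow> X (\<sigma> j))"

definition symmetric :: "nat \<Rightarrow> lpoly \<Rightarrow> bool" where
  "symmetric n p = (\<forall>\<sigma>. \<sigma> permutes {1..n} \<longrightarrow>
      (\<forall>m. Poly_Mapping.lookup p (Poly_Mapping.map_key (rv \<sigma>) m) = Poly_Mapping.lookup p m))"

definition sym_gens :: "nat \<Rightarrow> lpoly set" where
  "sym_gens n = {p. in_ring n p \<and> symmetric n p \<and> (\<forall>m\<in>Poly_Mapping.keys p. 0 < xdeg m)}"

definition S_ideal :: "nat \<Rightarrow> lpoly set" where
  "S_ideal n = {(\<Sum>i<(k::nat). q i * g i) | k q g.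
      \<forall>i<k. in_ring n (q i) \<and> g i \<in> sym_gens n}"

definition nonconst_xmon :: "nat \<Rightarrow> mon \<Rightarrow> bool" where
  "nonconst_xmon n m = (m \<noteq> 0 \<and> (\<forall>v\<in>Poly_Mapping.keys m. \<exists>j. 1 \<le> j \<and> j \<le> n \<and> v = X j))"

definition monom :: "mon \<Rightarrow> lpoly" where
  "monom m = Poly_Mapping.single m 1"

text \<open>representative of the class of a point: x_1^(n-1) x_2^(n-2) ... x_(n-1)
  (the point class equals this up to sign, which does not affect L.[pt])\<close>
definition pt :: "nat \<Rightarrow> lpoly" where
  "pt n = monom (\<Sum>j\<in>{1..n}. Poly_Mapping.single (X j) (n - j))"

end

theory Submission
  imports Defs "HOL-Computational_Algebra.Formal_Power_Series"
begin

unbundle fps_syntax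

text \<open>
  Write \<open>\<delta> = (n-1, n-2, ..., 0)\<close>, so that \<open>pt n = x^\<delta>\<close>.  Modulo S a power \<open>x_k^e\<close> with
  \<open>e > n - k\<close> can be lowered using the complete homogeneous polynomial \<open>h_e(x_1, ..., x_k)\<close>,
  which lies in S because \<open>\<Prod>_{i\<le>k} (1 - x_i t)^{-1} \<cdot> \<Prod>_{i\<le>n} (1 - x_i t)\<close> is a polynomial
  of degree \<open>n - k\<close> in t.  Hence c is congruent to a polynomial q whose monomials have x-part
  dividing \<open>x^\<delta>\<close>.  For every monomial a in the Lazard generators the alternating coefficient
  \<open>p \<mapsto> \<Sum>_\<sigma> sgn \<sigma> \<cdot> coeff_p (a x^{\<sigma>\<delta>})\<close> vanishes on S.  Applied to \<open>q x^{\<delta>-e}\<close>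
  for a proper divisor \<open>x^e\<close> of \<open>x^\<delta>\<close>, it expresses the coefficient of \<open>a x^e\<close> in q by
  coefficients at lexicographically smaller divisors, so all of these vanish and q is a
  multiple of \<open>x^\<delta>\<close>.
\<close>

definition perm_mon :: "(nat \<Rightarrow> nat) \<Rightarrow> mon \<Rightarrow> mon" where
  "perm_mon \<sigma> m = Poly_Mapping.map_key (rv \<sigma>) m"

definition perm_poly :: "(nat \<Rightarrow> nat) \<Rightarrow> lpoly \<Rightarrow> lpoly" where
  "perm_poly \<sigma> p = Poly_Mapping.map_key (perm_mon \<sigma>) p"

lemma inj_rv: "inj \<sigma> \<Longrightarrow> inj (rv \<sigma>)"
  unfolding inj_def rv_def by (auto split: lvar.splits)

lemma rv_comp: "rv \<sigma> (rv \<tau> v) = rv (\<sigma> \<circ> \<tau>) v"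
  unfolding rv_def by (auto split: lvar.splits)

lemma lookup_perm_mon:
  "inj \<sigma> \<Longrightarrow> Poly_Mapping.lookup (perm_mon \<sigma> m) v = Poly_Mapping.lookup m (rv \<sigma> v)"
  unfolding perm_mon_def using inj_rv by (simp add: map_key.rep_eq)

lemma perm_mon_add: "inj \<sigma> \<Longrightarrow> perm_mon \<sigma> (a + b) = perm_mon \<sigma> a + perm_mon \<sigma> b"
  unfolding perm_mon_def using inj_rv by (simp add: map_key_plus)

lemma perm_mon_diff: "inj \<sigma> \<Longrightarrow> perm_mon \<sigma> (a - b) = perm_mon \<sigma> a - perm_mon \<sigma> b"
  by (rule poly_mapping_eqI) (simp add: lookup_perm_mon lookup_minus)

lemma perm_mon_comp: "inj \<sigma> \<Longrightarrow> inj \<tau> \<Longrightarrow> perm_mon \<sigma> (perm_mon \<tau> m) = perm_mon (\<tau> \<circ> \<sigma>) m"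
  by (rule poly_mapping_eqI) (simp add: lookup_perm_mon inj_compose rv_comp)

lemma perm_mon_id [simp]: "perm_mon id m = m"
  by (rule poly_mapping_eqI) (simp add: lookup_perm_mon rv_def split: lvar.splits)

lemma bij_perm_mon:
  assumes "bij \<sigma>"
  shows "bij (perm_mon \<sigma>)"
proof -
  have inj: "inj \<sigma>" "inj (inv \<sigma>)"
    using assms bij_is_inj bij_imp_bij_inv by auto
  have "perm_mon (inv \<sigma>) (perm_mon \<sigma> m) = m" for m
    using perm_mon_comp[OF inj(2,1)] surj_iff[THEN iffD1, OF bij_is_surj[OF assms]] by simp
  moreover have "perm_mon \<sigma> (perm_mon (inv \<sigma>) m) = m" for m
    using perm_mon_comp[OF inj] assms by (simp add: inv_o_cancel bij_is_inj)
  ultimately show ?thesis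
    by (intro bij_betw_byWitness[of UNIV "perm_mon (inv \<sigma>)"]) auto
qed

lemma perm_mon_eq_0_iff: "bij \<sigma> \<Longrightarrow> perm_mon \<sigma> m = 0 \<longleftrightarrow> m = 0"
  using bij_is_inj[OF bij_perm_mon] perm_mon_add[of \<sigma> 0 0] bij_is_inj
  by (metis add_cancel_right_right injD)

lemma lookup_perm_poly:
  "bij \<sigma> \<Longrightarrow> Poly_Mapping.lookup (perm_poly \<sigma> p) m = Poly_Mapping.lookup p (perm_mon \<sigma> m)"
  unfolding perm_poly_def by (simp add: map_key.rep_eq[OF bij_is_inj[OF bij_perm_mon]])

lemma perm_poly_add: "bij \<sigma> \<Longrightarrow> perm_poly \<sigma> (p + q) = perm_poly \<sigma> p + perm_poly \<sigma> q"
  by (rule poly_mapping_eqI) (simp add: lookup_perm_poly lookup_add)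

lemma perm_poly_0 [simp]: "bij \<sigma> \<Longrightarrow> perm_poly \<sigma> 0 = 0"
  by (rule poly_mapping_eqI) (simp add: lookup_perm_poly)

lemma perm_poly_sum: "bij \<sigma> \<Longrightarrow> perm_poly \<sigma> (sum f B) = (\<Sum>i\<in>B. perm_poly \<sigma> (f i))"
  by (induction B rule: infinite_finite_induct) (simp_all add: perm_poly_add)

lemma perm_poly_uminus: "bij \<sigma> \<Longrightarrow> perm_poly \<sigma> (- p) = - perm_poly \<sigma> p"
  by (rule poly_mapping_eqI) (simp add: lookup_perm_poly)

lemma perm_poly_1: "bij \<sigma> \<Longrightarrow> perm_poly \<sigma> 1 = 1"
  by (rule poly_mapping_eqI) (simp add: lookup_perm_poly lookup_one perm_mon_eq_0_iff when_def)

lemma perm_poly_mult: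
  assumes "bij \<sigma>"
  shows "perm_poly \<sigma> (p * q) = perm_poly \<sigma> p * perm_poly \<sigma> q"
proof (rule poly_mapping_eqI)
  fix k
  let ?g = "perm_mon \<sigma>"
  have bij_g: "bij ?g" using bij_perm_mon[OF assms] .
  have g_add: "?g a + ?g b = ?g (a + b)" for a b
    using perm_mon_add assms bij_is_inj by metis
  have inner: "(\<Sum>r. Poly_Mapping.lookup q r when ?g k = ?g l + r) =
      (\<Sum>r. Poly_Mapping.lookup q (?g r) when k = l + r)" for l
    by (rule Sum_any.reindex_cong[OF bij_g])
      (use bij_is_inj[OF bij_g] in \<open>auto simp: fun_eq_iff g_add inj_eq\<close>)
  have "Poly_Mapping.lookup (perm_poly \<sigma> (p * q)) k
      = (\<Sum>l. Poly_Mapping.lookup p l * (\<Sum>r. Poly_Mapping.lookup q r when ?g k = l + r))"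
    by (simp add: lookup_perm_poly[OF assms] lookup_mult)
  also have "\<dots> = (\<Sum>l. Poly_Mapping.lookup p (?g l) *
      (\<Sum>r. Poly_Mapping.lookup q r when ?g k = ?g l + r))"
    by (rule Sum_any.reindex_cong[OF bij_g]) (simp add: o_def)
  also have "\<dots> = Poly_Mapping.lookup (perm_poly \<sigma> p * perm_poly \<sigma> q) k"
    by (simp add: lookup_perm_poly[OF assms] lookup_mult inner)
  finally show "Poly_Mapping.lookup (perm_poly \<sigma> (p * q)) k
      = Poly_Mapping.lookup (perm_poly \<sigma> p * perm_poly \<sigma> q) k" .
qed

lemma symmetric_iff_perm_poly:
  "symmetric n p \<longleftrightarrow> (\<forall>\<sigma>. \<sigma> permutes {1..n} \<longrightarrow> perm_poly \<sigma> p = p)"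
  unfolding symmetric_def
  by (auto intro!: poly_mapping_eqI simp: lookup_perm_poly permutes_bij perm_mon_def)
    (metis lookup_perm_poly permutes_bij perm_mon_def)

lemma lookup_perm_mon_sym_gen:
  "g \<in> sym_gens n \<Longrightarrow> \<tau> permutes {1..n} \<Longrightarrow>
    Poly_Mapping.lookup g (perm_mon \<tau> x) = Poly_Mapping.lookup g x"
  unfolding sym_gens_def symmetric_def perm_mon_def by blast

definition all_monoms :: "(mon \<Rightarrow> bool) \<Rightarrow> lpoly \<Rightarrow> bool" where
  "all_monoms P p = (\<forall>m\<in>Poly_Mapping.keys p. P m)"

lemma all_monoms_0 [simp]: "all_monoms P 0"
  by (simp add: all_monoms_def)

lemma all_monoms_add: "all_monoms P p \<Longrightarrow> all_monoms P q \<Longrightarrow> all_monoms P (p + q)"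
  unfolding all_monoms_def using Poly_Mapping.keys_add[of p q] by blast

lemma all_monoms_uminus: "all_monoms P p \<Longrightarrow> all_monoms P (- p)"
  unfolding all_monoms_def by (simp only: keys_minus)

lemma all_monoms_sum: "(\<And>i. i \<in> I \<Longrightarrow> all_monoms P (f i)) \<Longrightarrow> all_monoms P (sum f I)"
  by (induction I rule: infinite_finite_induct) (simp_all add: all_monoms_add)

lemma all_monoms_mult:
  assumes "\<And>a b. P a \<Longrightarrow> Q b \<Longrightarrow> R (a + b)" "all_monoms P p" "all_monoms Q q"
  shows "all_monoms R (p * q)"
  unfolding all_monoms_def
proof
  fix m assume "m \<in> Poly_Mapping.keys (p * q)"
  then obtain a b where "m = a + b" "a \<in> Poly_Mapping.keys p" "b \<in> Poly_Mapping.keys q"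
    using Poly_Mapping.keys_mult[of p q] by auto
  then show "R m" using assms unfolding all_monoms_def by auto
qed

lemma all_monoms_single: "P m \<Longrightarrow> all_monoms P (Poly_Mapping.single m c)"
  by (simp add: all_monoms_def)

lemma all_monoms_of_int: "P 0 \<Longrightarrow> all_monoms P (of_int c)"
  using all_monoms_single[of P 0 "of_int c"] by (simp only: single_of_int)

lemma all_monoms_of_int_mult: "all_monoms P q \<Longrightarrow> all_monoms P (of_int c * q)"
  by (rule all_monoms_mult[of "\<lambda>m. m = 0" P P]) (simp_all add: all_monoms_of_int)

lemma all_monoms_mono: "all_monoms P p \<Longrightarrow> (\<And>m. P m \<Longrightarrow> Q m) \<Longrightarrow> all_monoms Q p"
  by (auto simp: all_monoms_def)

definition mon_in_ring :: "nat \<Rightarrow> mon \<Rightarrow> bool" where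
  "mon_in_ring n m = (\<forall>v\<in>Poly_Mapping.keys m. var_ok n v)"

lemma in_ring_iff_all_monoms: "in_ring n p = all_monoms (mon_in_ring n) p"
  by (simp add: in_ring_def all_monoms_def mon_in_ring_def)

lemma homog_iff_all_monoms: "homog l p = all_monoms (\<lambda>m. wdeg m = l) p"
  by (simp add: homog_def all_monoms_def)

lemma keys_add_mon: "Poly_Mapping.keys ((a::mon) + b) = Poly_Mapping.keys a \<union> Poly_Mapping.keys b"
  by (auto simp: in_keys_iff lookup_add)

lemma mon_in_ring_add: "mon_in_ring n a \<Longrightarrow> mon_in_ring n b \<Longrightarrow> mon_in_ring n (a + b)"
  by (auto simp: mon_in_ring_def keys_add_mon)

lemma mon_in_ring_lookup_X:
  "mon_in_ring n m \<Longrightarrow> j = 0 \<or> n < j \<Longrightarrow> Poly_Mapping.lookup m (X j) = 0"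
  by (force simp: mon_in_ring_def var_ok_def in_keys_iff)

lemma in_ring_add: "in_ring n p \<Longrightarrow> in_ring n q \<Longrightarrow> in_ring n (p + q)"
  by (simp add: in_ring_iff_all_monoms all_monoms_add)

lemma in_ring_uminus: "in_ring n p \<Longrightarrow> in_ring n (- p)"
  by (simp add: in_ring_iff_all_monoms all_monoms_uminus)

lemma in_ring_mult: "in_ring n p \<Longrightarrow> in_ring n q \<Longrightarrow> in_ring n (p * q)"
  unfolding in_ring_iff_all_monoms
  by (auto intro!: all_monoms_mult[where P = "mon_in_ring n" and Q = "mon_in_ring n"] mon_in_ring_add)

lemma in_ring_of_int: "in_ring n (of_int c)"
  by (simp add: in_ring_iff_all_monoms all_monoms_of_int mon_in_ring_def)

lemma in_ring_1: "in_ring n 1"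
  using in_ring_of_int[of n 1] by simp

lemma in_ring_monom: "mon_in_ring n m \<Longrightarrow> in_ring n (monom m)"
  by (simp add: in_ring_iff_all_monoms monom_def all_monoms_single)

lemma wdeg_eq_sum_superset:
  "finite F \<Longrightarrow> Poly_Mapping.keys m \<subseteq> F \<Longrightarrow>
    wdeg m = (\<Sum>v\<in>F. int (Poly_Mapping.lookup m v) * var_wt v)"
  unfolding wdeg_def by (rule sum.mono_neutral_left) (auto simp: in_keys_iff)

lemma wdeg_add: "wdeg (a + b) = wdeg a + wdeg b"
  using wdeg_eq_sum_superset[of "Poly_Mapping.keys a \<union> Poly_Mapping.keys b"]
  by (simp add: keys_add_mon lookup_add sum.distrib[symmetric] algebra_simps)

lemma wdeg_0 [simp]: "wdeg 0 = 0"
  by (simp add: wdeg_def)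

lemma wdeg_sum: "wdeg (sum f B) = (\<Sum>i\<in>B. wdeg (f i))"
  by (induction B rule: infinite_finite_induct) (simp_all add: wdeg_add)

lemma wdeg_single_X: "wdeg (Poly_Mapping.single (X k) t) = int t"
  by (simp add: wdeg_def var_wt_def)

lemma xdeg_eq_sum_superset:
  "finite F \<Longrightarrow> Poly_Mapping.keys m \<subseteq> F \<Longrightarrow>
    xdeg m = (\<Sum>v\<in>F. case v of X j \<Rightarrow> Poly_Mapping.lookup m v | A i \<Rightarrow> 0)"
  unfolding xdeg_def by (rule sum.mono_neutral_left) (auto simp: in_keys_iff split: lvar.splits)

lemma xdeg_add: "xdeg (a + b) = xdeg a + xdeg b"
  using xdeg_eq_sum_superset[of "Poly_Mapping.keys a \<union> Poly_Mapping.keys b"]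
  by (auto simp: keys_add_mon lookup_add sum.distrib[symmetric] intro!: sum.cong split: lvar.splits)

lemma xdeg_0 [simp]: "xdeg 0 = 0"
  by (simp add: xdeg_def)

lemma xdeg_single_X: "xdeg (Poly_Mapping.single (X k) t) = t"
  by (simp add: xdeg_def)

lemma homog_add: "homog l p \<Longrightarrow> homog l q \<Longrightarrow> homog l (p + q)"
  by (simp add: homog_iff_all_monoms all_monoms_add)

lemma homog_mult: "homog l1 p \<Longrightarrow> homog l2 q \<Longrightarrow> homog (l1 + l2) (p * q)"
  unfolding homog_iff_all_monoms by (erule all_monoms_mult[rotated]) (auto simp: wdeg_add)

lemma homog_of_int: "homog 0 (of_int c)"
  by (simp add: homog_iff_all_monoms all_monoms_of_int)

lemma monom_add: "monom (a + b) = monom a * monom b"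
  by (simp add: monom_def mult_single)

lemma single_eq_of_int_mult_monom: "Poly_Mapping.single m c = of_int c * monom m"
  by (simp add: monom_def single_of_int[symmetric] mult_single)

lemma poly_eq_sum_monoms:
  "p = (\<Sum>m\<in>Poly_Mapping.keys p. of_int (Poly_Mapping.lookup p m) * monom m)"
proof (rule poly_mapping_eqI)
  fix k
  have "(\<Sum>m\<in>Poly_Mapping.keys p.
          Poly_Mapping.lookup (of_int (Poly_Mapping.lookup p m) * monom m) k)
      = (\<Sum>m\<in>Poly_Mapping.keys p. if k = m then Poly_Mapping.lookup p m else 0)"
    by (rule sum.cong) (simp_all add: single_eq_of_int_mult_monom[symmetric] lookup_single when_def)
  then show "Poly_Mapping.lookup p k = Poly_Mapping.lookup
      (\<Sum>m\<in>Poly_Mapping.keys p. of_int (Poly_Mapping.lookup p m) * monom m) k"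
    by (simp add: lookup_sum in_keys_iff)
qed

lemma sum_lessThan_add: "(\<Sum>i<a + b. h i) = (\<Sum>i<a. h i) + (\<Sum>i<b. h (a + i))"
  for h :: "nat \<Rightarrow> 'a::comm_monoid_add"
  by (induct b) (simp_all add: add.assoc)

lemma sym_gen_in_S_ideal: "g \<in> sym_gens n \<Longrightarrow> g \<in> S_ideal n"
  unfolding S_ideal_def
  by (intro CollectI exI[of _ 1] exI[of _ "\<lambda>_. 1"] exI[of _ "\<lambda>_. g"]) (simp add: in_ring_1)

lemma S_ideal_0: "0 \<in> S_ideal n"
  unfolding S_ideal_def by (intro CollectI exI[of _ 0]) simp

lemma S_ideal_add:
  assumes "p \<in> S_ideal n" "r \<in> S_ideal n"
  shows "p + r \<in> S_ideal n"
proof -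
  obtain k1 q1 g1 where p: "p = (\<Sum>i<(k1::nat). q1 i * g1 i)"
    and 1: "\<forall>i<k1. in_ring n (q1 i) \<and> g1 i \<in> sym_gens n"
    using assms(1) unfolding S_ideal_def by blast
  obtain k2 q2 g2 where r: "r = (\<Sum>i<(k2::nat). q2 i * g2 i)"
    and 2: "\<forall>i<k2. in_ring n (q2 i) \<and> g2 i \<in> sym_gens n"
    using assms(2) unfolding S_ideal_def by blast
  define q where "q i = (if i < k1 then q1 i else q2 (i - k1))" for i
  define g where "g i = (if i < k1 then g1 i else g2 (i - k1))" for i
  have "p + r = (\<Sum>i<k1 + k2. q i * g i)"
    by (simp add: sum_lessThan_add p r q_def g_def)
  moreover have "\<forall>i<k1 + k2. in_ring n (q i) \<and> g i \<in> sym_gens n"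
    using 1 2 by (auto simp: q_def g_def)
  ultimately show ?thesis
    unfolding S_ideal_def by blast
qed

lemma S_ideal_mult:
  assumes "p \<in> S_ideal n" "in_ring n r"
  shows "r * p \<in> S_ideal n"
proof -
  obtain k q g where p: "p = (\<Sum>i<(k::nat). q i * g i)"
    and "\<forall>i<k. in_ring n (q i) \<and> g i \<in> sym_gens n"
    using assms(1) unfolding S_ideal_def by blast
  then have "r * p = (\<Sum>i<k. (r * q i) * g i)" "\<forall>i<k. in_ring n (r * q i) \<and> g i \<in> sym_gens n"
    using assms(2) by (simp_all add: sum_distrib_left mult.assoc in_ring_mult)
  then show ?thesis
    unfolding S_ideal_def mem_Collect_eq by (intro exI[of _ k] exI[of _ "\<lambda>i. r * q i"] exI[of _ g]) simp
qed

lemma S_ideal_mult_right: "p \<in> S_ideal n \<Longrightarrow> in_ring n r \<Longrightarrow> p * r \<in> S_ideal n"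
  using S_ideal_mult by (simp add: mult.commute)

lemma S_ideal_uminus: "p \<in> S_ideal n \<Longrightarrow> - p \<in> S_ideal n"
  using S_ideal_mult[of p n "- 1"] in_ring_uminus[OF in_ring_1] by simp

lemma S_ideal_diff: "p \<in> S_ideal n \<Longrightarrow> r \<in> S_ideal n \<Longrightarrow> p - r \<in> S_ideal n"
  using S_ideal_add[of p n "- r"] S_ideal_uminus by simp

lemma S_ideal_sum: "(\<And>i. i \<in> I \<Longrightarrow> f i \<in> S_ideal n) \<Longrightarrow> sum f I \<in> S_ideal n"
  by (induction I rule: infinite_finite_induct) (auto intro: S_ideal_add S_ideal_0)

section \<open>Elementary and complete homogeneous symmetric polynomials\<close>

definition xvar :: "nat \<Rightarrow> lpoly" where
  "xvar j = monom (Poly_Mapping.single (X j) 1)"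

definition lin_fps :: "nat \<Rightarrow> lpoly fps" where
  "lin_fps i = 1 - fps_const (xvar i) * fps_X"

definition geom_fps :: "nat \<Rightarrow> lpoly fps" where
  "geom_fps i = Abs_fps (\<lambda>t. xvar i ^ t)"

definition esym :: "nat \<Rightarrow> nat \<Rightarrow> lpoly" where
  "esym r j = (\<Prod>i\<in>{1..r}. lin_fps i) $ j"

definition hsym :: "nat \<Rightarrow> nat \<Rightarrow> lpoly" where
  "hsym k d = (\<Prod>i\<in>{1..k}. geom_fps i) $ d"

lemma xvar_power: "xvar i ^ t = monom (Poly_Mapping.single (X i) t)"
  by (induction t) (simp_all add: xvar_def monom_def mult_single single_add[symmetric] add.commute)

lemma lin_fps_nth: "lin_fps i $ t = (if t = 0 then 1 else if t = 1 then - xvar i else 0)"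
  by (simp add: lin_fps_def)

lemma geom_fps_mult_lin_fps: "geom_fps i * lin_fps i = 1"
proof (rule fps_ext)
  fix t
  have "geom_fps i * lin_fps i = geom_fps i - fps_const (xvar i) * (fps_X * geom_fps i)"
    by (simp add: lin_fps_def algebra_simps)
  then show "(geom_fps i * lin_fps i) $ t = 1 $ t"
    by (cases t) (simp_all add: geom_fps_def)
qed

lemma fps_prod_nth_0: "(\<Prod>i\<in>B. f i) $ 0 = (\<Prod>i\<in>B. f i $ 0)"
  for f :: "nat \<Rightarrow> 'a::comm_ring_1 fps"
  by (induction B rule: infinite_finite_induct) simp_all

lemma prod_lin_fps_nth_eq_0: "finite B \<Longrightarrow> card B < t \<Longrightarrow> (\<Prod>i\<in>B. lin_fps i) $ t = 0"
proof (induction B arbitrary: t rule: finite_induct)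
  case (insert x F)
  have "lin_fps x * (\<Prod>i\<in>F. lin_fps i)
      = (\<Prod>i\<in>F. lin_fps i) - fps_const (xvar x) * (fps_X * (\<Prod>i\<in>F. lin_fps i))"
    by (simp add: lin_fps_def algebra_simps)
  with insert show ?case
    by (cases t) simp_all
qed simp

lemma esym_hsym_convolution:
  assumes "k \<le> n" "n - k < d"
  shows "(\<Sum>j=0..d. esym n j * hsym k (d - j)) = 0"
proof -
  have "{1..n} = {1..k} \<union> {k+1..n}" "{1..k} \<inter> {k+1..n} = {}"
    using assms(1) by auto
  then have "(\<Prod>i\<in>{1..n}. lin_fps i) * (\<Prod>i\<in>{1..k}. geom_fps i)
      = ((\<Prod>i\<in>{1..k}. geom_fps i) * (\<Prod>i\<in>{1..k}. lin_fps i)) * (\<Prod>i\<in>{k+1..n}. lin_fps i)"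
    by (simp add: prod.union_disjoint ac_simps)
  also have "(\<Prod>i\<in>{1..k}. geom_fps i) * (\<Prod>i\<in>{1..k}. lin_fps i) = 1"
    by (simp add: prod.distrib[symmetric] geom_fps_mult_lin_fps)
  finally have "(\<Prod>i\<in>{1..n}. lin_fps i) * (\<Prod>i\<in>{1..k}. geom_fps i)
      = (\<Prod>i\<in>{k+1..n}. lin_fps i)"
    by simp
  then have "((\<Prod>i\<in>{1..n}. lin_fps i) * (\<Prod>i\<in>{1..k}. geom_fps i)) $ d = 0"
    using prod_lin_fps_nth_eq_0[of "{k+1..n}" d] assms by simp
  then show ?thesis
    by (simp only: fps_mult_nth esym_def hsym_def)
qed

lemma esym_0: "esym n 0 = 1"
  by (simp add: esym_def fps_prod_nth_0 lin_fps_nth)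

lemma hsym_0: "hsym k 0 = 1"
  by (simp add: hsym_def fps_prod_nth_0 geom_fps_def)

lemma hsym_Suc:
  "hsym (Suc k) d = xvar (Suc k) ^ d + (\<Sum>i=1..d. hsym k i * xvar (Suc k) ^ (d - i))"
proof -
  have "(\<Prod>i\<in>{1..Suc k}. geom_fps i) = (\<Prod>i\<in>{1..k}. geom_fps i) * geom_fps (Suc k)"
    by (simp add: prod.nat_ivl_Suc' mult.commute)
  then have "hsym (Suc k) d = (\<Sum>i=0..d. hsym k i * xvar (Suc k) ^ (d - i))"
    by (simp add: hsym_def fps_mult_nth geom_fps_def)
  also have "\<dots> = hsym k 0 * xvar (Suc k) ^ d + (\<Sum>i=1..d. hsym k i * xvar (Suc k) ^ (d - i))"
    by (simp add: sum.atLeast_Suc_atMost)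
  finally show ?thesis
    by (simp add: hsym_0)
qed

definition x_monomial :: "nat \<Rightarrow> nat \<Rightarrow> mon \<Rightarrow> bool" where
  "x_monomial k d m \<longleftrightarrow> (\<forall>v\<in>Poly_Mapping.keys m. \<exists>j. 1 \<le> j \<and> j \<le> k \<and> v = X j) \<and> xdeg m = d"

lemma x_monomial_add: "x_monomial k a m1 \<Longrightarrow> x_monomial k b m2 \<Longrightarrow> x_monomial k (a + b) (m1 + m2)"
  unfolding x_monomial_def by (auto simp: keys_add_mon xdeg_add)

lemma x_monomial_lookup_X:
  assumes "x_monomial k d m" "k < j"
  shows "Poly_Mapping.lookup m (X j) = 0"
proof (rule ccontr)
  assume "Poly_Mapping.lookup m (X j) \<noteq> 0"
  then have "X j \<in> Poly_Mapping.keys m" by (simp add: in_keys_iff)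
  with assms show False unfolding x_monomial_def by auto
qed

lemma x_monomials_1: "all_monoms (x_monomial k 0) 1"
  by (simp add: all_monoms_def x_monomial_def)

lemma mon_in_ring_if_x_monomial: "x_monomial k d m \<Longrightarrow> k \<le> n \<Longrightarrow> mon_in_ring n m"
  by (auto simp: x_monomial_def mon_in_ring_def var_ok_def)

lemma wdeg_x_monomial:
  assumes "x_monomial k d m"
  shows "wdeg m = int d"
proof -
  have X: "\<exists>j. v = X j" if "v \<in> Poly_Mapping.keys m" for v
    using assms that unfolding x_monomial_def by blast
  have "wdeg m = int (xdeg m)"
    unfolding wdeg_def xdeg_def of_nat_sum by (rule sum.cong) (auto dest!: X simp: var_wt_def)
  with assms show ?thesis
    by (simp add: x_monomial_def)
qed

lemma x_monomials_fps_mult: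
  assumes "\<And>t. all_monoms (x_monomial k t) (F $ t)" "\<And>t. all_monoms (x_monomial k t) (G $ t)"
  shows "all_monoms (x_monomial k t) ((F * G) $ t)"
  unfolding fps_mult_nth
proof (rule all_monoms_sum)
  fix i assume "i \<in> {0..t}"
  then show "all_monoms (x_monomial k t) (F $ i * G $ (t - i))"
    by (intro all_monoms_mult[OF _ assms(1)[of i] assms(2)[of "t - i"]])
      (use x_monomial_add[of k i _ "t - i"] in auto)
qed

lemma x_monomials_fps_prod:
  assumes "\<And>i t. i \<in> B \<Longrightarrow> all_monoms (x_monomial k t) (f i $ t)"
  shows "all_monoms (x_monomial k t) ((\<Prod>i\<in>B. f i) $ t)"
  using assms
proof (induction B arbitrary: t rule: infinite_finite_induct)
  case (insert x F)
  then show ?case by (simp add: x_monomials_fps_mult)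
qed (simp_all add: x_monomials_1)

lemma x_monomials_xvar_power: "1 \<le> i \<Longrightarrow> i \<le> k \<Longrightarrow> all_monoms (x_monomial k t) (xvar i ^ t)"
  by (auto simp: xvar_power monom_def x_monomial_def xdeg_single_X intro!: all_monoms_single)

lemma x_monomials_esym: "all_monoms (x_monomial r t) (esym r t)"
  unfolding esym_def
proof (rule x_monomials_fps_prod)
  fix i t assume "i \<in> {1..r}"
  then show "all_monoms (x_monomial r t) (lin_fps i $ t)"
    using x_monomials_xvar_power[of i r 1] all_monoms_uminus[of "x_monomial r 1" "xvar i"]
      x_monomials_1[of r]
    by (simp add: lin_fps_nth)
qed

lemma x_monomials_hsym: "all_monoms (x_monomial k t) (hsym k t)"
  unfolding hsym_def
  by (rule x_monomials_fps_prod) (simp add: geom_fps_def x_monomials_xvar_power)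

lemma in_ring_if_x_monomials:
  assumes "all_monoms (x_monomial k t) p" "k \<le> n"
  shows "in_ring n p"
  unfolding in_ring_iff_all_monoms
  using assms(1) by (rule all_monoms_mono) (rule mon_in_ring_if_x_monomial[OF _ assms(2)])

lemma perm_poly_xvar:
  assumes "bij \<sigma>"
  shows "perm_poly \<sigma> (xvar i) = xvar (\<sigma> i)"
proof (rule poly_mapping_eqI)
  fix m
  have inj: "inj \<sigma>" using assms bij_is_inj by auto
  have "perm_mon \<sigma> (Poly_Mapping.single (X (\<sigma> i)) 1) = Poly_Mapping.single (X i) 1"
    by (rule poly_mapping_eqI)
      (simp add: lookup_perm_mon[OF inj] lookup_single when_def rv_def inj_eq[OF inj] split: lvar.splits)
  then have "perm_mon \<sigma> m = Poly_Mapping.single (X i) 1 \<longleftrightarrow> m = Poly_Mapping.single (X (\<sigma> i)) 1"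
    using inj_eq[OF bij_is_inj[OF bij_perm_mon[OF assms]]] by metis
  then show "Poly_Mapping.lookup (perm_poly \<sigma> (xvar i)) m = Poly_Mapping.lookup (xvar (\<sigma> i)) m"
    by (simp add: lookup_perm_poly[OF assms] xvar_def monom_def lookup_single when_def)
qed

lemma perm_poly_esym:
  assumes "\<sigma> permutes {1..n}"
  shows "perm_poly \<sigma> (esym n j) = esym n j"
proof -
  have b: "bij \<sigma>" using permutes_bij[OF assms] .
  define perm_fps where "perm_fps F = Abs_fps (\<lambda>t. perm_poly \<sigma> (F $ t))" for F
  have mult: "perm_fps (F * G) = perm_fps F * perm_fps G" for F G
    by (rule fps_ext) (simp add: perm_fps_def fps_mult_nth perm_poly_sum[OF b] perm_poly_mult[OF b])
  have one: "perm_fps 1 = 1"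
    by (rule fps_ext) (simp add: perm_fps_def perm_poly_1[OF b] perm_poly_0[OF b])
  have "perm_fps (\<Prod>i\<in>B. lin_fps i) = (\<Prod>i\<in>B. lin_fps (\<sigma> i))" for B
  proof (induction B rule: infinite_finite_induct)
    case (insert x F)
    have "perm_fps (lin_fps x) = lin_fps (\<sigma> x)"
      by (rule fps_ext) (simp add: perm_fps_def lin_fps_nth perm_poly_1[OF b] perm_poly_uminus[OF b]
          perm_poly_xvar[OF b] perm_poly_0[OF b])
    with insert show ?case by (simp add: mult)
  qed (simp_all add: one)
  also have "(\<Prod>i\<in>{1..n}. lin_fps (\<sigma> i)) = (\<Prod>i\<in>{1..n}. lin_fps i)"
    using prod.permute[OF assms, of lin_fps] by (simp add: o_def)
  finally show ?thesis
    unfolding esym_def by (metis fps_nth_Abs_fps perm_fps_def)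
qed

lemma esym_in_sym_gens:
  assumes "1 \<le> j"
  shows "esym n j \<in> sym_gens n"
  unfolding sym_gens_def
proof (intro CollectI conjI)
  show "in_ring n (esym n j)"
    using x_monomials_esym order_refl by (rule in_ring_if_x_monomials)
  show "symmetric n (esym n j)"
    unfolding symmetric_iff_perm_poly using perm_poly_esym by blast
  show "\<forall>m\<in>Poly_Mapping.keys (esym n j). 0 < xdeg m"
    using x_monomials_esym[of n j] assms by (auto simp: all_monoms_def x_monomial_def)
qed

lemma hsym_in_S_ideal:
  assumes "k \<le> n" "n - k < d"
  shows "hsym k d \<in> S_ideal n"
proof -
  have "hsym k d = - (\<Sum>j=1..d. esym n j * hsym k (d - j))"
    using esym_hsym_convolution[OF assms]
    by (simp add: sum.atLeast_Suc_atMost esym_0 eq_neg_iff_add_eq_0 add.commute)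
  moreover have "(\<Sum>j=1..d. esym n j * hsym k (d - j)) \<in> S_ideal n"
    using assms(1)
    by (intro S_ideal_sum S_ideal_mult_right sym_gen_in_S_ideal esym_in_sym_gens
        in_ring_if_x_monomials[OF x_monomials_hsym]) auto
  ultimately show ?thesis
    using S_ideal_uminus by simp
qed

section \<open>Reduction modulo S to exponents below the staircase\<close>

definition reduced :: "nat \<Rightarrow> lpoly \<Rightarrow> bool" where
  "reduced n q = all_monoms (\<lambda>m. \<forall>j. Poly_Mapping.lookup m (X j) \<le> n - j) q"

definition reducible :: "nat \<Rightarrow> int \<Rightarrow> lpoly \<Rightarrow> bool" where
  "reducible n w p \<longleftrightarrow> (\<exists>q. in_ring n q \<and> homog w q \<and> reduced n q \<and> p - q \<in> S_ideal n)"

lemma reducible_0: "reducible n w 0"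
  unfolding reducible_def reduced_def
  by (intro exI[of _ 0]) (simp add: in_ring_def homog_def S_ideal_0)

lemma reducible_add:
  assumes "reducible n w p" "reducible n w r"
  shows "reducible n w (p + r)"
proof -
  obtain q1 where q1: "in_ring n q1" "homog w q1" "reduced n q1" "p - q1 \<in> S_ideal n"
    using assms(1) unfolding reducible_def by blast
  obtain q2 where q2: "in_ring n q2" "homog w q2" "reduced n q2" "r - q2 \<in> S_ideal n"
    using assms(2) unfolding reducible_def by blast
  have "p + r - (q1 + q2) = (p - q1) + (r - q2)"
    by (simp add: algebra_simps)
  with S_ideal_add[OF q1(4) q2(4)] have "p + r - (q1 + q2) \<in> S_ideal n"
    by (simp only:)
  moreover have "reduced n (q1 + q2)"
    using q1(3) q2(3) unfolding reduced_def by (rule all_monoms_add)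
  ultimately show ?thesis
    unfolding reducible_def using in_ring_add[OF q1(1) q2(1)] homog_add[OF q1(2) q2(2)] by blast
qed

lemma reducible_of_int_mult:
  assumes "reducible n w p"
  shows "reducible n w (of_int c * p)"
proof -
  obtain q where q: "in_ring n q" "homog w q" "reduced n q" "p - q \<in> S_ideal n"
    using assms unfolding reducible_def by blast
  have "of_int c * p - of_int c * q \<in> S_ideal n"
    using S_ideal_mult[OF q(4) in_ring_of_int] by (simp add: algebra_simps)
  moreover have "reduced n (of_int c * q)"
    using q(3) unfolding reduced_def by (rule all_monoms_of_int_mult)
  moreover have "homog w (of_int c * q)"
    using homog_mult[OF homog_of_int q(2)] by simp
  ultimately show ?thesis
    unfolding reducible_def using in_ring_mult[OF in_ring_of_int q(1)] by blast
qed

lemma reducible_sum: "(\<And>i. i \<in> B \<Longrightarrow> reducible n w (f i)) \<Longrightarrow> reducible n w (sum f B)"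
  by (induction B rule: infinite_finite_induct) (simp_all add: reducible_0 reducible_add)

lemma reducible_if_monoms:
  assumes "all_monoms (\<lambda>m. reducible n w (monom m)) p"
  shows "reducible n w p"
proof -
  have "reducible n w (\<Sum>m\<in>Poly_Mapping.keys p. of_int (Poly_Mapping.lookup p m) * monom m)"
    using assms by (intro reducible_sum reducible_of_int_mult) (simp add: all_monoms_def)
  then show ?thesis
    by (simp only: poly_eq_sum_monoms[of p, symmetric])
qed

lemma reducible_congruent:
  assumes "reducible n w p" "p' - p \<in> S_ideal n"
  shows "reducible n w p'"
proof -
  obtain q where q: "in_ring n q" "homog w q" "reduced n q" "p - q \<in> S_ideal n"
    using assms(1) unfolding reducible_def by blast
  have "p' - q = (p' - p) + (p - q)" by simp
  then have "p' - q \<in> S_ideal n" using S_ideal_add[OF assms(2) q(4)] by simp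
  then show ?thesis unfolding reducible_def using q by blast
qed

lemma reducible_monom_if_reduced:
  assumes "mon_in_ring n m" "\<forall>j>0. Poly_Mapping.lookup m (X j) \<le> n - j"
  shows "reducible n (wdeg m) (monom m)"
proof -
  have "Poly_Mapping.lookup m (X j) \<le> n - j" for j
    using assms(2) mon_in_ring_lookup_X[OF assms(1), of 0] by (cases "j = 0") simp_all
  then have "reduced n (monom m)"
    by (simp add: reduced_def monom_def all_monoms_single)
  then show ?thesis
    unfolding reducible_def using in_ring_monom[OF assms(1)] S_ideal_0
    by (intro exI[of _ "monom m"]) (simp add: homog_def monom_def)
qed

text \<open>Since \<open>x_k^d = h_d(x_1, ..., x_k) - \<Sum>_{1\<le>i\<le>d} h_i(x_1, ..., x_{k-1}) x_k^{d-i}\<close>, a power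
  \<open>x_k^d\<close> with \<open>d > n - k\<close> is congruent to terms of lower degree in \<open>x_k\<close>.\<close>

lemma monom_eq_hsym_minus_lower:
  assumes "1 \<le> k"
  shows "monom (m + Poly_Mapping.single (X k) d) = monom m * hsym k d
    - (\<Sum>i=1..d. monom m * (hsym (k - 1) i * xvar k ^ (d - i)))"
proof -
  obtain k' where k: "k = Suc k'" using assms by (cases k) auto
  have "monom m * hsym k d = monom (m + Poly_Mapping.single (X k) d)
      + (\<Sum>i=1..d. monom m * (hsym (k - 1) i * xvar k ^ (d - i)))"
    unfolding k hsym_Suc by (simp add: xvar_power monom_add distrib_left sum_distrib_left)
  then show ?thesis
    by (simp add: eq_diff_eq)
qed

lemma monoms_lower_term:
  assumes "i \<in> {1..d}" "1 \<le> k" "k \<le> n" "mon_in_ring n m"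
  shows "all_monoms (\<lambda>m''. mon_in_ring n m'' \<and> wdeg m'' = wdeg m + int d
      \<and> Poly_Mapping.lookup m'' (X k) < Poly_Mapping.lookup m (X k) + d
      \<and> (\<forall>j>k. Poly_Mapping.lookup m'' (X j) = Poly_Mapping.lookup m (X j)))
    (monom m * (hsym (k - 1) i * xvar k ^ (d - i)))"
proof -
  let ?xk = "Poly_Mapping.single (X k) (d - i)"
  have xk: "all_monoms (\<lambda>b. b = ?xk) (xvar k ^ (d - i))"
    by (simp add: xvar_power monom_def all_monoms_single)
  have hx: "all_monoms (\<lambda>c. \<exists>m0. x_monomial (k - 1) i m0 \<and> c = m0 + ?xk)
      (hsym (k - 1) i * xvar k ^ (d - i))"
    by (rule all_monoms_mult[OF _ x_monomials_hsym xk]) auto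
  have m: "all_monoms (\<lambda>a. a = m) (monom m)"
    by (simp add: monom_def all_monoms_single)
  have "all_monoms (\<lambda>m''. \<exists>m0. x_monomial (k - 1) i m0 \<and> m'' = m + (m0 + ?xk))
      (monom m * (hsym (k - 1) i * xvar k ^ (d - i)))"
    by (rule all_monoms_mult[OF _ m hx]) auto
  then show ?thesis
  proof (rule all_monoms_mono, elim exE conjE)
    fix m'' m0 assume m0: "x_monomial (k - 1) i m0" and m'': "m'' = m + (m0 + ?xk)"
    have "mon_in_ring n m0" "mon_in_ring n ?xk"
      using mon_in_ring_if_x_monomial[OF m0] assms(2,3)
      by (auto simp: mon_in_ring_def var_ok_def)
    moreover have "Poly_Mapping.lookup m0 (X j) = 0" if "k - 1 < j" for j
      using x_monomial_lookup_X[OF m0 that] .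
    ultimately show "mon_in_ring n m'' \<and> wdeg m'' = wdeg m + int d
      \<and> Poly_Mapping.lookup m'' (X k) < Poly_Mapping.lookup m (X k) + d
      \<and> (\<forall>j>k. Poly_Mapping.lookup m'' (X j) = Poly_Mapping.lookup m (X j))"
      using assms(1,2,4) wdeg_x_monomial[OF m0]
      by (auto simp: m'' mon_in_ring_add wdeg_add wdeg_single_X lookup_add lookup_single)
  qed
qed

lemma reducible_monom_if_lower_reducible:
  assumes k: "1 \<le> k" "k \<le> n" and m: "mon_in_ring n m" "n - k < Poly_Mapping.lookup m (X k)"
    and lower: "\<And>m''. mon_in_ring n m'' \<Longrightarrow> Poly_Mapping.lookup m'' (X k) < Poly_Mapping.lookup m (X k)
      \<Longrightarrow> \<forall>j>k. Poly_Mapping.lookup m'' (X j) = Poly_Mapping.lookup m (X j)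
      \<Longrightarrow> reducible n (wdeg m'') (monom m'')"
  shows "reducible n (wdeg m) (monom m)"
proof -
  define d where "d = Suc (n - k)"
  define m' where "m' = m - Poly_Mapping.single (X k) d"
  have m_eq: "m = m' + Poly_Mapping.single (X k) d"
    using m(2) by (intro poly_mapping_eqI) (auto simp: m'_def d_def lookup_add lookup_minus lookup_single when_def)
  have "Poly_Mapping.keys m' \<subseteq> Poly_Mapping.keys m"
    by (auto simp: m'_def in_keys_iff lookup_minus)
  then have m': "mon_in_ring n m'"
    using m(1) by (auto simp: mon_in_ring_def)
  let ?T = "\<lambda>i. monom m' * (hsym (k - 1) i * xvar k ^ (d - i))"
  have "monom m - (- (\<Sum>i=1..d. ?T i)) = monom m' * hsym k d"
    using monom_eq_hsym_minus_lower[OF k(1), of m' d] by (simp add: m_eq[symmetric])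
  moreover have "monom m' * hsym k d \<in> S_ideal n"
    by (rule S_ideal_mult[OF hsym_in_S_ideal[OF k(2)] in_ring_monom[OF m']]) (simp add: d_def)
  ultimately have congruent: "monom m - (- (\<Sum>i=1..d. ?T i)) \<in> S_ideal n"
    by simp
  have lookup_m: "Poly_Mapping.lookup m (X j) = Poly_Mapping.lookup m' (X j) + (if j = k then d else 0)"
    for j by (simp add: m_eq lookup_add lookup_single)
  have "reducible n (wdeg m) (?T i)" if "i \<in> {1..d}" for i
    using monoms_lower_term[OF that k m']
  proof (intro reducible_if_monoms, elim all_monoms_mono conjE)
    fix m'' assume ring: "mon_in_ring n m''" and wdeg: "wdeg m'' = wdeg m' + int d"
      and "Poly_Mapping.lookup m'' (X k) < Poly_Mapping.lookup m' (X k) + d"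
      and "\<forall>j>k. Poly_Mapping.lookup m'' (X j) = Poly_Mapping.lookup m' (X j)"
    then have "reducible n (wdeg m'') (monom m'')"
      using lower[OF ring] lookup_m by simp
    then show "reducible n (wdeg m) (monom m'')"
      using wdeg by (simp add: m_eq wdeg_add wdeg_single_X)
  qed
  then have "reducible n (wdeg m) (of_int (- 1) * (\<Sum>i=1..d. ?T i))"
    by (intro reducible_of_int_mult reducible_sum)
  then have "reducible n (wdeg m) (- (\<Sum>i=1..d. ?T i))"
    by simp
  then show ?thesis
    using congruent by (rule reducible_congruent)
qed

lemma reducible_monom_step:
  assumes k: "1 \<le> k" "k \<le> n"
    and below: "\<And>m. mon_in_ring n m \<Longrightarrow> \<forall>j>k - 1. Poly_Mapping.lookup m (X j) \<le> n - j \<Longrightarrow>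
      reducible n (wdeg m) (monom m)"
  shows "mon_in_ring n m \<Longrightarrow> \<forall>j>k. Poly_Mapping.lookup m (X j) \<le> n - j \<Longrightarrow>
    reducible n (wdeg m) (monom m)"
proof (induction "Poly_Mapping.lookup m (X k)" arbitrary: m rule: less_induct)
  case less
  show ?case
  proof (cases "Poly_Mapping.lookup m (X k) \<le> n - k")
    case True
    have "\<forall>j>k - 1. Poly_Mapping.lookup m (X j) \<le> n - j"
    proof (intro allI impI)
      fix j assume "k - 1 < j"
      then have "j = k \<or> k < j" by auto
      then show "Poly_Mapping.lookup m (X j) \<le> n - j" using True less.prems(2) by auto
    qed
    then show ?thesis using below less.prems(1) by blast
  next
    case False
    then show ?thesis
      using less by (intro reducible_monom_if_lower_reducible[OF k less.prems(1)]) simp_all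
  qed
qed

lemma reducible_monom:
  assumes "mon_in_ring n m"
  shows "reducible n (wdeg m) (monom m)"
proof -
  have "k \<le> n \<Longrightarrow> mon_in_ring n m \<Longrightarrow> \<forall>j>k. Poly_Mapping.lookup m (X j) \<le> n - j \<Longrightarrow>
      reducible n (wdeg m) (monom m)" for k m
  proof (induction k arbitrary: m)
    case 0
    then show ?case by (intro reducible_monom_if_reduced) simp_all
  next
    case (Suc k)
    show ?case
      by (rule reducible_monom_step[of "Suc k" n]) (use Suc in auto)
  qed
  moreover have "\<forall>j>n. Poly_Mapping.lookup m (X j) \<le> n - j"
    using mon_in_ring_lookup_X[OF assms] by simp
  ultimately show ?thesis
    using assms by blast
qed

lemma reducible_if_homog:
  assumes "in_ring n c" "homog l c"
  shows "reducible n l c"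
  using assms reducible_monom
  by (intro reducible_if_monoms) (force simp: all_monoms_def in_ring_iff_all_monoms homog_iff_all_monoms)

section \<open>An alternating coefficient functional vanishing on S\<close>

definition mon_dvd :: "mon \<Rightarrow> mon \<Rightarrow> bool" where
  "mon_dvd m k \<longleftrightarrow> (\<forall>v. Poly_Mapping.lookup m v \<le> Poly_Mapping.lookup k v)"

lemma mon_dvd_imp_eq_add: "mon_dvd m k \<Longrightarrow> k = m + (k - m)"
  by (rule poly_mapping_eqI) (simp add: mon_dvd_def lookup_add lookup_minus)

lemma mon_dvd_iff: "mon_dvd m k \<longleftrightarrow> (\<exists>q. k = m + q)"
  using mon_dvd_imp_eq_add by (auto simp: mon_dvd_def lookup_add)

lemma mon_dvd_perm_mon:
  assumes "bij \<sigma>"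
  shows "mon_dvd (perm_mon \<sigma> x) (perm_mon \<sigma> y) \<longleftrightarrow> mon_dvd x y"
proof -
  have "rv \<sigma> (rv (inv \<sigma>) v) = v" for v
    using assms by (auto simp: rv_def bij_is_surj surj_f_inv_f split: lvar.splits)
  then show ?thesis
    unfolding mon_dvd_def lookup_perm_mon[OF bij_is_inj[OF assms]] by metis
qed

lemma lookup_single_mult:
  "Poly_Mapping.lookup (Poly_Mapping.single m c * (g::lpoly)) k
    = (if mon_dvd m k then c * Poly_Mapping.lookup g (k - m) else 0)"
proof -
  have "Poly_Mapping.lookup (Poly_Mapping.single m c * g) k
      = (\<Sum>a. (if a = m then c else 0) * (\<Sum>q. Poly_Mapping.lookup g q when k = a + q))"
    by (simp add: lookup_mult lookup_single when_def eq_commute[of m])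
  also have "\<dots> = (\<Sum>a. if a = m then c * (\<Sum>q. Poly_Mapping.lookup g q when k = a + q) else 0)"
    by (rule Sum_any.cong) simp
  also have "\<dots> = c * (\<Sum>q. Poly_Mapping.lookup g q when k = m + q)"
    by simp
  also have "(\<Sum>q. Poly_Mapping.lookup g q when k = m + q)
      = (if mon_dvd m k then Poly_Mapping.lookup g (k - m) else 0)"
  proof (cases "mon_dvd m k")
    case True
    then have "k = m + q \<longleftrightarrow> q = k - m" for q
      using mon_dvd_imp_eq_add by auto
    then show ?thesis using True by simp
  qed (simp add: mon_dvd_iff)
  finally show ?thesis by simp
qed

lemma lookup_monom_mult:
  "Poly_Mapping.lookup (monom m * g) k = (if mon_dvd m k then Poly_Mapping.lookup g (k - m) else 0)"
  using lookup_single_mult[of m 1 g k] by (simp add: monom_def)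

lemma lookup_of_int_mult: "Poly_Mapping.lookup (of_int c * (p::lpoly)) k = c * Poly_Mapping.lookup p k"
proof -
  have "Poly_Mapping.single (0::mon) (of_int c :: int) = (of_int c :: lpoly)"
    by (rule single_of_int)
  then have "of_int c * p = Poly_Mapping.single 0 c * p"
    by simp
  then show ?thesis
    using lookup_single_mult[of 0 c p k] by (simp add: mon_dvd_def)
qed

definition delta :: "nat \<Rightarrow> mon" where
  "delta n = (\<Sum>j\<in>{1..n}. Poly_Mapping.single (X j) (n - j))"

lemma lookup_delta:
  "Poly_Mapping.lookup (delta n) v = (case v of X j \<Rightarrow> if 1 \<le> j \<and> j \<le> n then n - j else 0 | A i \<Rightarrow> 0)"
  by (auto simp: delta_def lookup_sum lookup_single when_def split: lvar.splits)

lemma lookup_perm_mon_delta: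
  assumes "\<sigma> permutes {1..n}"
  shows "Poly_Mapping.lookup (perm_mon \<sigma> (delta n)) (X j) = (if j \<in> {1..n} then n - \<sigma> j else 0)"
  using permutes_in_image[OF assms, of j]
  by (auto simp: lookup_perm_mon[OF permutes_inj[OF assms]] lookup_delta rv_def)

lemma sum_atLeastAtMost_diff_eq_sum_lessThan: "(\<Sum>j=1..n. n - j) = (\<Sum>i<n. i)" for n :: nat
proof (induction n)
  case (Suc n)
  have "(\<Sum>j=1..Suc n. Suc n - j) = (\<Sum>j=1..n. Suc n - j)"
    by simp
  also have "\<dots> = (\<Sum>j=1..n. (n - j) + 1)"
    by (rule sum.cong) auto
  also have "\<dots> = (\<Sum>j=1..n. n - j) + n"
    unfolding sum.distrib by simp
  finally show ?case
    using Suc.IH by simp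
qed simp

lemma wdeg_delta: "wdeg (delta n) = int (n * (n - 1) div 2)"
proof -
  have "wdeg (delta n) = int (\<Sum>j=1..n. n - j)"
    unfolding delta_def wdeg_sum by (simp add: wdeg_single_X)
  also have "(\<Sum>j=1..n. n - j) = (\<Sum>i<n. i)"
    by (rule sum_atLeastAtMost_diff_eq_sum_lessThan)
  also have "\<dots> = n * (n - 1) div 2"
    using Sum_Ico_nat[of 0 n] by (simp add: lessThan_atLeast0)
  finally show ?thesis .
qed

definition alt_coeff :: "nat \<Rightarrow> mon \<Rightarrow> lpoly \<Rightarrow> int" where
  "alt_coeff n a p = (\<Sum>\<sigma>\<in>{\<sigma>. \<sigma> permutes {1..n}}.
      sign \<sigma> * Poly_Mapping.lookup p (perm_mon \<sigma> (delta n) + a))"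

definition x_free :: "mon \<Rightarrow> bool" where
  "x_free a \<longleftrightarrow> (\<forall>j. Poly_Mapping.lookup a (X j) = 0)"

lemma alt_coeff_add: "alt_coeff n a (p + q) = alt_coeff n a p + alt_coeff n a q"
  by (simp add: alt_coeff_def lookup_add algebra_simps sum.distrib)

lemma alt_coeff_0 [simp]: "alt_coeff n a 0 = 0"
  by (simp add: alt_coeff_def)

lemma alt_coeff_sum: "alt_coeff n a (sum f B) = (\<Sum>i\<in>B. alt_coeff n a (f i))"
  by (induction B rule: infinite_finite_induct) (simp_all add: alt_coeff_add)

lemma alt_coeff_of_int_mult: "alt_coeff n a (of_int c * p) = c * alt_coeff n a p"
  by (simp add: alt_coeff_def lookup_of_int_mult sum_distrib_left mult.left_commute)

lemma perm_mon_x_free: "inj \<sigma> \<Longrightarrow> x_free a \<Longrightarrow> perm_mon \<sigma> a = a"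
  by (rule poly_mapping_eqI) (auto simp: lookup_perm_mon x_free_def rv_def split: lvar.splits)

lemma sum_permutations_eq_0_if_antisymmetric:
  fixes t :: "('a \<Rightarrow> 'a) \<Rightarrow> int"
  assumes "\<tau> permutes S" "\<And>\<sigma>. \<sigma> permutes S \<Longrightarrow> t (\<sigma> \<circ> \<tau>) = - t \<sigma>"
  shows "(\<Sum>\<sigma>\<in>{\<sigma>. \<sigma> permutes S}. t \<sigma>) = 0"
proof -
  have "(\<Sum>\<sigma>\<in>{\<sigma>. \<sigma> permutes S}. t \<sigma>) = (\<Sum>\<sigma>\<in>{\<sigma>. \<sigma> permutes S}. t (\<sigma> \<circ> \<tau>))"
    by (rule sum_permutations_compose_right[OF assms(1)])
  also have "\<dots> = - (\<Sum>\<sigma>\<in>{\<sigma>. \<sigma> permutes S}. t \<sigma>)"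
    by (simp add: assms(2) sum_negf)
  finally show ?thesis by simp
qed

text \<open>If two x-exponents of \<open>m\<close> agree, swapping them pairs off the terms with opposite signs.\<close>

lemma alt_coeff_monom_mult_sym_gen_repeated:
  assumes a: "x_free a" and g: "g \<in> sym_gens n"
    and ij: "i \<in> {1..n}" "j \<in> {1..n}" "i \<noteq> j"
    and eq: "Poly_Mapping.lookup m (X i) = Poly_Mapping.lookup m (X j)"
  shows "alt_coeff n a (monom m * g) = 0"
proof -
  define \<tau> where "\<tau> = Transposition.transpose i j"
  have \<tau>: "\<tau> permutes {1..n}" using ij by (simp add: \<tau>_def permutes_swap_id)
  have inj_\<tau>: "inj \<tau>" using permutes_inj[OF \<tau>] .
  define K where "K \<sigma> = perm_mon \<sigma> (delta n) + a" for \<sigma>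
  define t where "t \<sigma> = (sign \<sigma> :: int) * Poly_Mapping.lookup (monom m * g) (K \<sigma>)" for \<sigma>
  have m_fixed: "perm_mon \<tau> m = m"
  proof (rule poly_mapping_eqI)
    fix v
    show "Poly_Mapping.lookup (perm_mon \<tau> m) v = Poly_Mapping.lookup m v"
      unfolding lookup_perm_mon[OF inj_\<tau>] using eq
      by (auto simp: rv_def \<tau>_def transpose_def split: lvar.splits)
  qed
  have "t (\<sigma> \<circ> \<tau>) = - t \<sigma>" if \<sigma>: "\<sigma> permutes {1..n}" for \<sigma>
  proof -
    have "permutation \<sigma>" "permutation \<tau>"
      using \<sigma> \<tau> permutation_permutes by blast+
    then have "(sign (\<sigma> \<circ> \<tau>) :: int) = - sign \<sigma>"
      using ij(3) by (simp add: sign_compose \<tau>_def sign_swap_id)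
    moreover have K: "K (\<sigma> \<circ> \<tau>) = perm_mon \<tau> (K \<sigma>)"
      unfolding K_def using perm_mon_comp[OF inj_\<tau> permutes_inj[OF \<sigma>]] perm_mon_add[OF inj_\<tau>]
        perm_mon_x_free[OF inj_\<tau> a] by simp
    moreover have "Poly_Mapping.lookup (monom m * g) (perm_mon \<tau> k) = Poly_Mapping.lookup (monom m * g) k"
      for k
      using mon_dvd_perm_mon[OF permutes_bij[OF \<tau>], of m k] perm_mon_diff[OF inj_\<tau>, of k m]
        lookup_perm_mon_sym_gen[OF g \<tau>, of "k - m"]
      by (simp add: lookup_monom_mult m_fixed)
    ultimately show ?thesis
      by (simp add: t_def)
  qed
  then show ?thesis
    unfolding alt_coeff_def using sum_permutations_eq_0_if_antisymmetric[OF \<tau>]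
    by (simp add: t_def K_def)
qed

lemma sum_lessThan_card_le_sum: "finite S \<Longrightarrow> (\<Sum>i<card S. i) \<le> \<Sum>S"
proof (induction "card S" arbitrary: S)
  case (Suc c)
  define M where "M = Max S"
  have M: "M \<in> S"
    using Suc M_def by (metis Max_in card.empty nat.distinct(1))
  have card: "c = card (S - {M})"
    using Suc.hyps(2) M Suc.prems by simp
  have "S \<subseteq> {0..M}"
    using Suc.prems M_def by auto
  then have "c \<le> M"
    using card_mono[of "{0..M}" S] Suc.hyps(2) by simp
  moreover have "(\<Sum>i<c. i) \<le> \<Sum>(S - {M})"
    using Suc.hyps(1)[OF card] Suc.prems by (simp add: card)
  moreover have "\<Sum>S = M + \<Sum>(S - {M})"
    using sum.remove[OF Suc.prems M, of "\<lambda>x. x"] by simp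
  ultimately show ?case
    using Suc.hyps(2)[symmetric] by simp
qed simp

text \<open>By injectivity the exponents add up to at least \<open>0 + 1 + ... + (n - 1)\<close>, which is the
  total of the bound.\<close>

lemma inj_bounded_by_staircase_eq:
  fixes f :: "nat \<Rightarrow> nat"
  assumes inj: "inj_on f {1..n}" and \<sigma>: "\<sigma> permutes {1..n}"
    and le: "\<forall>j\<in>{1..n}. f j \<le> n - \<sigma> j"
  shows "\<forall>j\<in>{1..n}. f j = n - \<sigma> j"
proof (rule ccontr)
  assume "\<not> ?thesis"
  then obtain j where "j \<in> {1..n}" "f j < n - \<sigma> j" using le by force
  then have "(\<Sum>j=1..n. f j) < (\<Sum>j=1..n. n - \<sigma> j)"
    using le by (intro sum_strict_mono_ex1) auto
  also have "(\<Sum>j=1..n. n - \<sigma> j) = (\<Sum>i<n. i)"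
    using sum.permute[OF \<sigma>, of "\<lambda>j. n - j"] sum_atLeastAtMost_diff_eq_sum_lessThan[of n]
    by (simp add: o_def)
  also have "\<dots> \<le> (\<Sum>j=1..n. f j)"
    using sum_lessThan_card_le_sum[of "f ` {1..n}"] inj by (simp add: card_image sum.reindex)
  finally show False by simp
qed

lemma alt_coeff_monom_mult_sym_gen_distinct:
  assumes a: "x_free a" and g: "g \<in> sym_gens n"
    and inj: "inj_on (\<lambda>j. Poly_Mapping.lookup m (X j)) {1..n}"
  shows "alt_coeff n a (monom m * g) = 0"
  unfolding alt_coeff_def
proof (rule sum.neutral, rule ballI)
  fix \<sigma> assume "\<sigma> \<in> {\<sigma>. \<sigma> permutes {1..n}}"
  then have \<sigma>: "\<sigma> permutes {1..n}" by simp
  let ?K = "perm_mon \<sigma> (delta n) + a"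
  have lookup_K: "Poly_Mapping.lookup ?K (X j) = (if j \<in> {1..n} then n - \<sigma> j else 0)" for j
    using lookup_perm_mon_delta[OF \<sigma>] a by (simp add: lookup_add x_free_def)
  have "Poly_Mapping.lookup g (?K - m) = 0" if dvd: "mon_dvd m ?K"
  proof -
    have "\<forall>j\<in>{1..n}. Poly_Mapping.lookup m (X j) = n - \<sigma> j"
      using dvd lookup_K by (intro inj_bounded_by_staircase_eq[OF inj \<sigma>]) (metis mon_dvd_def)
    then have "x_free (?K - m)"
      using lookup_K by (auto simp: x_free_def lookup_minus)
    then have "xdeg (?K - m) = 0"
      by (auto simp: xdeg_def x_free_def intro!: sum.neutral split: lvar.splits)
    then have "?K - m \<notin> Poly_Mapping.keys g"
      using g unfolding sym_gens_def by auto
    then show ?thesis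
      by (simp add: in_keys_iff)
  qed
  then show "sign \<sigma> * Poly_Mapping.lookup (monom m * g) ?K = 0"
    by (simp add: lookup_monom_mult)
qed

lemma alt_coeff_S_ideal:
  assumes a: "x_free a" and p: "p \<in> S_ideal n"
  shows "alt_coeff n a p = 0"
proof -
  obtain k q g where p: "p = (\<Sum>i<(k::nat). q i * g i)" and g: "\<forall>i<k. g i \<in> sym_gens n"
    using p unfolding S_ideal_def by blast
  have "alt_coeff n a (monom m * g i) = 0" if "i < k" for m i
  proof (cases "inj_on (\<lambda>j. Poly_Mapping.lookup m (X j)) {1..n}")
    case True
    then show ?thesis using alt_coeff_monom_mult_sym_gen_distinct a g that by blast
  next
    case False
    then show ?thesis using alt_coeff_monom_mult_sym_gen_repeated[OF a] g that
      unfolding inj_on_def by blast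
  qed
  moreover have "q i * g i = (\<Sum>m\<in>Poly_Mapping.keys (q i). of_int (Poly_Mapping.lookup (q i) m) * (monom m * g i))"
    for i by (subst poly_eq_sum_monoms[of "q i"]) (simp add: sum_distrib_right mult.assoc)
  ultimately show ?thesis
    by (simp add: p alt_coeff_sum alt_coeff_of_int_mult)
qed

section \<open>Coefficients of a reduced polynomial annihilated by all x-monomials\<close>

lemma finite_mon_dvd: "finite {e. mon_dvd e d}"
proof -
  define g where "g f = (\<Sum>v\<in>Poly_Mapping.keys d. Poly_Mapping.single v (f v))" for f :: "lvar \<Rightarrow> nat"
  have "{e. mon_dvd e d} \<subseteq> g ` PiE (Poly_Mapping.keys d) (\<lambda>v. {0..Poly_Mapping.lookup d v})"
  proof
    fix e assume "e \<in> {e. mon_dvd e d}"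
    then have le: "Poly_Mapping.lookup e v \<le> Poly_Mapping.lookup d v" for v
      by (simp add: mon_dvd_def)
    have "e = g (restrict (Poly_Mapping.lookup e) (Poly_Mapping.keys d))"
    proof (rule poly_mapping_eqI)
      fix v
      have "Poly_Mapping.lookup (g (restrict (Poly_Mapping.lookup e) (Poly_Mapping.keys d))) v
          = (if v \<in> Poly_Mapping.keys d then Poly_Mapping.lookup e v else 0)"
        by (simp add: g_def lookup_sum lookup_single when_def sum.delta)
      then show "Poly_Mapping.lookup e v
          = Poly_Mapping.lookup (g (restrict (Poly_Mapping.lookup e) (Poly_Mapping.keys d))) v"
        using le[of v] by (simp add: in_keys_iff)
    qed
    moreover have "restrict (Poly_Mapping.lookup e) (Poly_Mapping.keys d)
        \<in> PiE (Poly_Mapping.keys d) (\<lambda>v. {0..Poly_Mapping.lookup d v})"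
      using le by auto
    ultimately show "e \<in> g ` PiE (Poly_Mapping.keys d) (\<lambda>v. {0..Poly_Mapping.lookup d v})"
      by blast
  qed
  then show ?thesis
    by (rule finite_subset) (intro finite_imageI finite_PiE; simp)
qed

definition lex_less :: "mon \<Rightarrow> mon \<Rightarrow> bool" where
  "lex_less u e \<longleftrightarrow> (\<exists>k. (\<forall>j<k. Poly_Mapping.lookup u (X j) = Poly_Mapping.lookup e (X j))
      \<and> Poly_Mapping.lookup u (X k) < Poly_Mapping.lookup e (X k))"

lemma lex_less_trans:
  assumes "lex_less u v" "lex_less v w"
  shows "lex_less u w"
proof -
  obtain k1 where k1: "\<forall>j<k1. Poly_Mapping.lookup u (X j) = Poly_Mapping.lookup v (X j)"
    "Poly_Mapping.lookup u (X k1) < Poly_Mapping.lookup v (X k1)"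
    using assms(1) lex_less_def by blast
  obtain k2 where k2: "\<forall>j<k2. Poly_Mapping.lookup v (X j) = Poly_Mapping.lookup w (X j)"
    "Poly_Mapping.lookup v (X k2) < Poly_Mapping.lookup w (X k2)"
    using assms(2) lex_less_def by blast
  show ?thesis
    unfolding lex_less_def
  proof (intro exI[of _ "min k1 k2"] conjI allI impI)
    show "Poly_Mapping.lookup u (X j) = Poly_Mapping.lookup w (X j)" if "j < min k1 k2" for j
      using k1 k2 that by simp
    show "Poly_Mapping.lookup u (X (min k1 k2)) < Poly_Mapping.lookup w (X (min k1 k2))"
      using k1 k2 by (cases k1 k2 rule: linorder_cases) (auto simp: min_def)
  qed
qed

lemma wf_lex_less_mon_dvd: "wf {(u, e). mon_dvd u d \<and> mon_dvd e d \<and> lex_less u e}"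
proof (rule finite_acyclic_wf)
  show "finite {(u, e). mon_dvd u d \<and> mon_dvd e d \<and> lex_less u e}"
    by (rule finite_subset[of _ "{e. mon_dvd e d} \<times> {e. mon_dvd e d}"]) (auto simp: finite_mon_dvd)
  have "trans {(u, e). mon_dvd u d \<and> mon_dvd e d \<and> lex_less u e}"
    unfolding trans_def using lex_less_trans by blast
  then show "acyclic {(u, e). mon_dvd u d \<and> mon_dvd e d \<and> lex_less u e}"
    unfolding acyclic_irrefl trancl_id irrefl_def by (simp add: lex_less_def)
qed

lemma not_lex_less_if_mon_dvd: "mon_dvd e u \<Longrightarrow> \<not> lex_less u e"
  unfolding mon_dvd_def lex_less_def by (meson not_le)

lemma permutes_first_moved_point:
  fixes \<sigma> :: "nat \<Rightarrow> nat"
  assumes \<sigma>: "\<sigma> permutes S" "\<sigma> \<noteq> id"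
  obtains k where "k \<in> S" "\<sigma> k \<in> S" "k < \<sigma> k" "\<forall>j<k. \<sigma> j = j"
proof -
  define k where "k = (LEAST k. \<sigma> k \<noteq> k)"
  have "\<exists>k. \<sigma> k \<noteq> k"
    using \<sigma>(2) by (metis eq_id_iff)
  then have moved: "\<sigma> k \<noteq> k"
    unfolding k_def by (rule LeastI_ex)
  have fixed: "\<forall>j<k. \<sigma> j = j"
    unfolding k_def using not_less_Least by blast
  have "k < \<sigma> k"
  proof (rule ccontr)
    assume "\<not> k < \<sigma> k"
    then have "\<sigma> (\<sigma> k) = \<sigma> k"
      using moved fixed by simp
    then show False
      using moved by (simp add: inj_eq[OF permutes_inj[OF \<sigma>(1)]])
  qed
  moreover have k: "k \<in> S"
    using moved permutes_not_in[OF \<sigma>(1)] by blast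
  moreover have "\<sigma> k \<in> S"
    using permutes_in_image[OF \<sigma>(1)] k by simp
  ultimately show ?thesis
    using that fixed by blast
qed

text \<open>The first index moved by \<open>\<sigma>\<close> is moved upwards, which lowers its exponent.\<close>

lemma lex_less_perm_delta_minus:
  assumes \<sigma>: "\<sigma> permutes {1..n}" "\<sigma> \<noteq> id" and e: "mon_dvd e (delta n)"
    and dvd: "mon_dvd (delta n - e) (perm_mon \<sigma> (delta n))"
  shows "lex_less (perm_mon \<sigma> (delta n) - (delta n - e)) e"
proof -
  let ?u = "perm_mon \<sigma> (delta n) - (delta n - e)"
  obtain k where k: "k \<in> {1..n}" "\<sigma> k \<in> {1..n}" "k < \<sigma> k" "\<forall>j<k. \<sigma> j = j"
    using permutes_first_moved_point[OF \<sigma>] .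
  have e_le: "Poly_Mapping.lookup e (X j) \<le> Poly_Mapping.lookup (delta n) (X j)" for j
    using e by (simp add: mon_dvd_def)
  have "Poly_Mapping.lookup (delta n - e) (X k) \<le> n - \<sigma> k"
    using dvd[unfolded mon_dvd_def, rule_format, of "X k"] k(1)
    by (simp add: lookup_perm_mon_delta[OF \<sigma>(1)])
  then have "Poly_Mapping.lookup ?u (X k) < Poly_Mapping.lookup e (X k)"
    using k e_le[of k] by (simp add: lookup_minus lookup_perm_mon_delta[OF \<sigma>(1)] lookup_delta)
  moreover have "Poly_Mapping.lookup ?u (X j) = Poly_Mapping.lookup e (X j)" if "j < k" for j
  proof (cases "j \<in> {1..n}")
    case True
    then show ?thesis
      using k(4) that e_le[of j] by (simp add: lookup_minus lookup_perm_mon_delta[OF \<sigma>(1)] lookup_delta)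
  next
    case False
    then show ?thesis
      using e_le[of j] by (auto simp: lookup_minus lookup_perm_mon_delta[OF \<sigma>(1)] lookup_delta)
  qed
  ultimately show ?thesis
    unfolding lex_less_def by blast
qed

lemma mon_dvd_delta_if_bounded:
  assumes \<sigma>: "\<sigma> permutes {1..n}" and dvd: "mon_dvd u (perm_mon \<sigma> (delta n))"
    and bounded: "\<forall>j. Poly_Mapping.lookup u (X j) \<le> n - j"
  shows "mon_dvd u (delta n)"
  unfolding mon_dvd_def
proof
  fix v
  show "Poly_Mapping.lookup u v \<le> Poly_Mapping.lookup (delta n) v"
  proof (cases v)
    case (X j)
    then show ?thesis
      using bounded dvd[unfolded mon_dvd_def, rule_format, of v]
      by (cases "j \<in> {1..n}") (auto simp: lookup_delta lookup_perm_mon_delta[OF \<sigma>])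
  next
    case (A i)
    then show ?thesis
      using dvd[unfolded mon_dvd_def, rule_format, of v]
      by (simp add: lookup_perm_mon[OF permutes_inj[OF \<sigma>]] rv_def lookup_delta)
  qed
qed

lemma coeff_perm_delta_minus_eq_0:
  assumes \<sigma>: "\<sigma> permutes {1..n}" "\<sigma> \<noteq> id" and q: "reduced n q"
    and e: "mon_dvd e (delta n)" and a: "x_free a"
    and dvd: "mon_dvd (delta n - e) (perm_mon \<sigma> (delta n) + a)"
    and below: "\<And>u. mon_dvd u (delta n) \<Longrightarrow> lex_less u e \<Longrightarrow> Poly_Mapping.lookup q (u + a) = 0"
  shows "Poly_Mapping.lookup q (perm_mon \<sigma> (delta n) + a - (delta n - e)) = 0"
proof -
  let ?u = "perm_mon \<sigma> (delta n) - (delta n - e)"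
  have lookup_A: "Poly_Mapping.lookup (perm_mon \<sigma> (delta n)) (A i) = 0" for i
    by (simp add: lookup_perm_mon[OF permutes_inj[OF \<sigma>(1)]] lookup_delta rv_def)
  have u: "perm_mon \<sigma> (delta n) + a - (delta n - e) = ?u + a"
  proof (rule poly_mapping_eqI)
    fix v
    show "Poly_Mapping.lookup (perm_mon \<sigma> (delta n) + a - (delta n - e)) v = Poly_Mapping.lookup (?u + a) v"
      using a lookup_A by (cases v) (simp_all add: lookup_minus lookup_add x_free_def lookup_delta)
  qed
  have dvd': "mon_dvd (delta n - e) (perm_mon \<sigma> (delta n))"
    unfolding mon_dvd_def
  proof
    fix v
    show "Poly_Mapping.lookup (delta n - e) v \<le> Poly_Mapping.lookup (perm_mon \<sigma> (delta n)) v"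
      using dvd[unfolded mon_dvd_def, rule_format, of v] a
      by (cases v) (simp_all add: lookup_add x_free_def lookup_minus lookup_delta)
  qed
  show ?thesis
  proof (cases "\<forall>j. Poly_Mapping.lookup ?u (X j) \<le> n - j")
    case True
    moreover have "mon_dvd ?u (perm_mon \<sigma> (delta n))"
      by (simp add: mon_dvd_def lookup_minus)
    ultimately show ?thesis
      using below mon_dvd_delta_if_bounded[OF \<sigma>(1)] lex_less_perm_delta_minus[OF \<sigma> e dvd'] u by simp
  next
    case False
    then obtain j where "n - j < Poly_Mapping.lookup (?u + a) (X j)"
      using a by (auto simp: lookup_add x_free_def not_le)
    then have "?u + a \<notin> Poly_Mapping.keys q"
      using q unfolding reduced_def all_monoms_def by (meson not_le)
    then show ?thesis
      by (simp add: u in_keys_iff)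
  qed
qed

lemma nonconst_xmon_delta_minus:
  assumes "mon_dvd e (delta n)" "e \<noteq> delta n"
  shows "nonconst_xmon n (delta n - e)"
proof -
  have "\<exists>j. 1 \<le> j \<and> j \<le> n \<and> v = X j" if "v \<in> Poly_Mapping.keys (delta n - e)" for v
  proof -
    have "Poly_Mapping.lookup (delta n) v \<noteq> 0"
      using that by (auto simp: in_keys_iff lookup_minus)
    then show ?thesis
      by (auto simp: lookup_delta split: lvar.splits if_splits)
  qed
  moreover have "delta n - e \<noteq> 0"
    using mon_dvd_imp_eq_add[OF assms(1)] assms(2) by auto
  ultimately show ?thesis
    by (simp add: nonconst_xmon_def)
qed

text \<open>Apply the alternating coefficient to \<open>x^{\<delta>-e} q \<in> S\<close>: the identity contributes the
  coefficient of \<open>a x^e\<close>, every other permutation one at a lexicographically smaller divisor.\<close>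

lemma coeff_below_delta_eq_0:
  assumes q: "in_ring n q" "reduced n q"
    and annihilated: "\<forall>b. nonconst_xmon n b \<longrightarrow> q * monom b \<in> S_ideal n"
  shows "mon_dvd e (delta n) \<Longrightarrow> e \<noteq> delta n \<Longrightarrow> x_free a \<Longrightarrow> Poly_Mapping.lookup q (e + a) = 0"
proof (induction e arbitrary: a rule: wf_induct_rule[OF wf_lex_less_mon_dvd[of "delta n"]])
  case (1 e)
  let ?b = "delta n - e"
  let ?t = "\<lambda>\<sigma>. sign \<sigma> * Poly_Mapping.lookup (monom ?b * q) (perm_mon \<sigma> (delta n) + a)"
  have below: "Poly_Mapping.lookup q (u + a) = 0" if "mon_dvd u (delta n)" "lex_less u e" for u
    using "1.IH" that "1.prems" not_lex_less_if_mon_dvd by blast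
  have id_shift: "perm_mon id (delta n) + a = ?b + (e + a)"
    using mon_dvd_imp_eq_add[OF "1.prems"(1)] by (simp add: ac_simps)
  have "0 = alt_coeff n a (monom ?b * q)"
    using alt_coeff_S_ideal[OF "1.prems"(3)] annihilated nonconst_xmon_delta_minus[OF "1.prems"(1,2)]
    by (simp add: mult.commute)
  also have "\<dots> = ?t id + (\<Sum>\<sigma>\<in>{\<sigma>. \<sigma> permutes {1..n}} - {id}. ?t \<sigma>)"
    unfolding alt_coeff_def by (rule sum.remove) (simp_all add: permutes_id finite_permutations)
  also have "(\<Sum>\<sigma>\<in>{\<sigma>. \<sigma> permutes {1..n}} - {id}. ?t \<sigma>) = 0"
  proof (rule sum.neutral, rule ballI)
    fix \<sigma> assume "\<sigma> \<in> {\<sigma>. \<sigma> permutes {1..n}} - {id}"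
    then have \<sigma>: "\<sigma> permutes {1..n}" "\<sigma> \<noteq> id" by auto
    show "?t \<sigma> = 0"
      using coeff_perm_delta_minus_eq_0[OF \<sigma> q(2) "1.prems"(1,3) _ below]
      by (simp add: lookup_monom_mult)
  qed
  also have "?t id = Poly_Mapping.lookup q (e + a)"
    using id_shift by (simp add: lookup_monom_mult mon_dvd_iff)
  finally show ?case by simp
qed

section \<open>Factoring out the point class\<close>

definition x_part :: "mon \<Rightarrow> mon" where
  "x_part m = Poly_Mapping.mapp (\<lambda>v c. case v of X j \<Rightarrow> c | A i \<Rightarrow> 0) m"

definition a_part :: "mon \<Rightarrow> mon" where
  "a_part m = Poly_Mapping.mapp (\<lambda>v c. case v of X j \<Rightarrow> 0 | A i \<Rightarrow> c) m"

lemma lookup_x_part: "Poly_Mapping.lookup (x_part m) v = (case v of X j \<Rightarrow> Poly_Mapping.lookup m v | A i \<Rightarrow> 0)"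
  by (auto simp: x_part_def lookup_mapp when_def in_keys_iff split: lvar.splits)

lemma lookup_a_part: "Poly_Mapping.lookup (a_part m) v = (case v of X j \<Rightarrow> 0 | A i \<Rightarrow> Poly_Mapping.lookup m v)"
  by (auto simp: a_part_def lookup_mapp when_def in_keys_iff split: lvar.splits)

lemma x_part_add_a_part: "x_part m + a_part m = m"
  by (rule poly_mapping_eqI) (simp add: lookup_add lookup_x_part lookup_a_part split: lvar.splits)

lemma x_free_a_part: "x_free (a_part m)"
  by (simp add: x_free_def lookup_a_part)

lemma x_part_eq_delta_if_annihilated:
  assumes q: "in_ring n q" "reduced n q"
    and annihilated: "\<forall>b. nonconst_xmon n b \<longrightarrow> q * monom b \<in> S_ideal n"
    and m: "m \<in> Poly_Mapping.keys q"
  shows "x_part m = delta n"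
proof (rule ccontr)
  assume "x_part m \<noteq> delta n"
  moreover have "mon_dvd (x_part m) (delta n)"
    unfolding mon_dvd_def
  proof
    fix v
    have ring: "mon_in_ring n m" and bounded: "\<forall>j. Poly_Mapping.lookup m (X j) \<le> n - j"
      using q m by (simp_all add: in_ring_iff_all_monoms reduced_def all_monoms_def)
    show "Poly_Mapping.lookup (x_part m) v \<le> Poly_Mapping.lookup (delta n) v"
    proof (cases v)
      case (X j)
      show ?thesis
      proof (cases "j \<in> {1..n}")
        case True
        then show ?thesis using bounded X by (simp add: lookup_x_part lookup_delta)
      next
        case False
        then have "j = 0 \<or> n < j" by auto
        then show ?thesis using mon_in_ring_lookup_X[OF ring] X by (simp add: lookup_x_part)
      qed
    qed (simp add: lookup_x_part)
  qed
  ultimately have "Poly_Mapping.lookup q (x_part m + a_part m) = 0"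
    using coeff_below_delta_eq_0[OF q annihilated] x_free_a_part by blast
  then show False
    using m by (simp add: x_part_add_a_part in_keys_iff)
qed

lemma eq_mult_pt_if_x_parts_delta:
  assumes q: "in_ring n q" "homog l q" and top: "\<forall>m\<in>Poly_Mapping.keys q. x_part m = delta n"
  shows "\<exists>a. in_Laz a \<and> homog (l - int (n * (n - 1) div 2)) a \<and> q = a * pt n"
proof -
  define a where "a = (\<Sum>m\<in>Poly_Mapping.keys q. of_int (Poly_Mapping.lookup q m) * monom (a_part m))"
  have "a * pt n = (\<Sum>m\<in>Poly_Mapping.keys q. of_int (Poly_Mapping.lookup q m) * monom (a_part m + delta n))"
    unfolding a_def pt_def delta_def by (simp add: sum_distrib_right mult.assoc monom_add)
  also have "\<dots> = (\<Sum>m\<in>Poly_Mapping.keys q. of_int (Poly_Mapping.lookup q m) * monom m)"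
  proof (rule sum.cong[OF refl])
    fix m assume "m \<in> Poly_Mapping.keys q"
    then have "a_part m + delta n = m"
      using top x_part_add_a_part[of m] by (simp add: add.commute)
    then show "of_int (Poly_Mapping.lookup q m) * monom (a_part m + delta n)
        = of_int (Poly_Mapping.lookup q m) * monom m"
      by simp
  qed
  finally have "q = a * pt n"
    using poly_eq_sum_monoms[of q] by simp
  have "all_monoms (\<lambda>m'. (\<forall>v\<in>Poly_Mapping.keys m'. \<exists>i\<ge>1. v = A i)
      \<and> wdeg m' = l - int (n * (n - 1) div 2)) a"
    unfolding a_def
  proof (intro all_monoms_sum all_monoms_of_int_mult, unfold monom_def, rule all_monoms_single)
    fix m assume m: "m \<in> Poly_Mapping.keys q"
    then have "\<forall>v\<in>Poly_Mapping.keys m. var_ok n v" "wdeg m = l"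
      using q by (auto simp: in_ring_def homog_def)
    moreover have "wdeg m = wdeg (delta n) + wdeg (a_part m)"
      using x_part_add_a_part[of m] top m wdeg_add by metis
    moreover have "v \<in> Poly_Mapping.keys (a_part m) \<Longrightarrow> v \<in> Poly_Mapping.keys m \<and> (\<exists>i. v = A i)" for v
      by (cases v) (simp_all add: in_keys_iff lookup_a_part)
    ultimately show "(\<forall>v\<in>Poly_Mapping.keys (a_part m). \<exists>i\<ge>1. v = A i)
      \<and> wdeg (a_part m) = l - int (n * (n - 1) div 2)"
      by (force simp: wdeg_delta var_ok_def)
  qed
  then have "in_Laz a" "homog (l - int (n * (n - 1) div 2)) a"
    by (auto simp: all_monoms_def in_Laz_def homog_def)
  with \<open>q = a * pt n\<close> show ?thesis
    by blast
qed

theorem lemma4p4: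
  fixes n :: nat and l :: int and c :: lpoly
  assumes "1 \<le> n"
    and "in_ring n c"
    and "homog l c"
    and "\<forall>m. nonconst_xmon n m \<longrightarrow> c * monom m \<in> S_ideal n"
  shows "\<exists>a. in_Laz a \<and> homog (l - int (n * (n - 1) div 2)) a \<and> c - a * pt n \<in> S_ideal n"
proof -
  obtain q where q: "in_ring n q" "homog l q" "reduced n q" and cq: "c - q \<in> S_ideal n"
    using reducible_if_homog[OF assms(2,3)] unfolding reducible_def by blast
  have "q * monom b \<in> S_ideal n" if "nonconst_xmon n b" for b
  proof -
    have "in_ring n (monom b)"
      using that by (intro in_ring_monom) (auto simp: nonconst_xmon_def mon_in_ring_def var_ok_def)
    then have "(c - q) * monom b \<in> S_ideal n"
      using cq by (rule S_ideal_mult_right[rotated])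
    then have "c * monom b - (c - q) * monom b \<in> S_ideal n"
      using S_ideal_diff assms(4) that by blast
    then show ?thesis
      by (simp add: algebra_simps)
  qed
  then have "\<forall>m\<in>Poly_Mapping.keys q. x_part m = delta n"
    using x_part_eq_delta_if_annihilated[OF q(1,3)] by blast
  then obtain a where "in_Laz a" "homog (l - int (n * (n - 1) div 2)) a" "q = a * pt n"
    using eq_mult_pt_if_x_parts_delta[OF q(1,2)] by blast
  with cq show ?thesis
    by blast
qed

end
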